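(* Let $r,k\geq2$ with $(r,k)\neq(2,2)$. There exist positive constants $K_1,K_2,K_3$ such that for any $0<\delta<\frac12$ and $c=c_{r,k}+n^{-\delta}$: $$\mu(c)-\mu_{r,k}=K_1n^{-\delta/2}+O(n^{-\delta}),\quad \alpha(c)-\alpha=K_2n^{-\delta/2}+O(n^{-\delta}),\quad \beta(c)-\beta=K_3n^{-\delta/2}+O(n^{-\delta}).$$
   Context: $f_t(\mu)=e^{-\mu}\sum_{i\geq t}\mu^i/i!$. Let $h(\mu)=\mu/f_{k-1}(\mu)^{r-1}$, $c_{r,k}=\inf_{\mu>0}(r-1)!h(\mu)$, and $\mu_{r,k}$ the unique minimizer, so $c_{r,k}=(r-1)!h(\mu_{r,k})$. For $c\geq c_{r,k}$, $\mu(c)$ is the largest solution of $c=(r-1)!h(\mu)$. Set $\alpha=f_k(\mu_{r,k})$, $\beta=\frac1r\mu_{r,k}f_{k-1}(\mu_{r,k})$, $\alpha(c)=f_k(\mu(c))$, $\beta(c)=\frac1r\mu(c)f_{k-1}(\mu(c))$. *)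

theory Defs
  imports Complex_Main "HOL-Library.Landau_Symbols"
begin

definition ftail :: "nat \<Rightarrow> real \<Rightarrow> real" where
  "ftail t \<mu> = exp (-\<mu>) * (\<Sum>i. \<mu> ^ (i + t) / fact (i + t))"

definition hfun :: "nat \<Rightarrow> nat \<Rightarrow> real \<Rightarrow> real" where
  "hfun r k \<mu> = \<mu> / (ftail (k - 1) \<mu>) ^ (r - 1)"

definition c_rk :: "nat \<Rightarrow> nat \<Rightarrow> real" where
  "c_rk r k = (INF \<mu>\<in>{0<..}. fact (r - 1) * hfun r k \<mu>)"

definition mu_rk :: "nat \<Rightarrow> nat \<Rightarrow> real" where
  "mu_rk r k = (THE \<mu>. \<mu> > 0 \<and> fact (r - 1) * hfun r k \<mu> = c_rk r k)"

definition mu_c :: "nat \<Rightarrow> nat \<Rightarrow> real \<Rightarrow> real" where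
  "mu_c r k c = (GREATEST \<mu>. \<mu> > 0 \<and> c = fact (r - 1) * hfun r k \<mu>)"

definition alpha_rk :: "nat \<Rightarrow> nat \<Rightarrow> real" where
  "alpha_rk r k = ftail k (mu_rk r k)"

definition beta_rk :: "nat \<Rightarrow> nat \<Rightarrow> real" where
  "beta_rk r k = (1 / real r) * mu_rk r k * ftail (k - 1) (mu_rk r k)"

definition alpha_c :: "nat \<Rightarrow> nat \<Rightarrow> real \<Rightarrow> real" where
  "alpha_c r k c = ftail k (mu_c r k c)"

definition beta_c :: "nat \<Rightarrow> nat \<Rightarrow> real \<Rightarrow> real" where
  "beta_c r k c = (1 / real r) * mu_c r k c * ftail (k - 1) (mu_c r k c)"

end

theory Submission
  imports Defs
begin

text \<open>
  Put H = (r-1)! h and g(\<mu>) = f_{k-1}(\<mu>) / (\<mu> f_{k-1}'(\<mu>)) = (k-2)! \<Sum>_i \<mu>^i / (i+k-1)!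
  (\<open>tail_ratio\<close> below). Then H' = w (g - (r-1)) with w > 0, and g increases strictly from
  1/(k-1), so for (r,k) \<noteq> (2,2) the minimiser \<mu>_{r,k} is the unique root of g = r - 1. Since
  g' > 0 there, the minimum is nondegenerate: H(\<mu>_{r,k} + s) = c_{r,k} + A s^2/2 + O(s^3) with A > 0.
  Inverting H on its increasing branch gives \<mu>(c_{r,k} + \<epsilon>) = \<mu>_{r,k} + sqrt(2\<epsilon>/A) + O(\<epsilon>).
  The expansions of \<alpha> and \<beta> follow by composing with f_k and \<mu> f_{k-1}(\<mu>)/r, whose derivatives
  at \<mu>_{r,k} are positive; finally \<epsilon> = n^{-\<delta>}.
\<close>

section \<open>Poisson tails\<close>

definition exp_partial_sum :: "nat \<Rightarrow> real \<Rightarrow> real" where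
  "exp_partial_sum m x = (\<Sum>i<m. x ^ i / fact i)"

definition exp_tail_series :: "nat \<Rightarrow> real \<Rightarrow> real" where
  "exp_tail_series t x = (\<Sum>i. x ^ i / fact (i + t))"

lemma exp_sums: "(\<lambda>i. x ^ i / fact i) sums exp (x::real)"
  using exp_converges[of x] by (simp add: divide_inverse mult.commute)

lemma ftail_eq_exp_partial_sum: "ftail t x = 1 - exp (-x) * exp_partial_sum t x"
proof -
  have "(\<lambda>i. x ^ (i + t) / fact (i + t)) sums (exp x - exp_partial_sum t x)"
    using sums_split_initial_segment[OF exp_sums, of x t] by (simp add: exp_partial_sum_def)
  then show ?thesis
    unfolding ftail_def by (simp add: sums_iff exp_minus field_simps)
qed

lemma ftail_fun_eq: "ftail t = (\<lambda>x. 1 - exp (-x) * exp_partial_sum t x)"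
  by (simp add: fun_eq_iff ftail_eq_exp_partial_sum)

lemma sums_exp_tail_series: "(\<lambda>i. x ^ i / fact (i + t)) sums exp_tail_series t (x::real)"
proof -
  have "summable (\<lambda>i. \<bar>x\<bar> ^ i / fact i)"
    using exp_sums[of "\<bar>x\<bar>"] by (simp add: sums_iff)
  moreover have "norm (x ^ i / fact (i + t)) \<le> \<bar>x\<bar> ^ i / fact i" for i
    by (simp add: abs_mult power_abs frac_le fact_mono)
  ultimately have "summable (\<lambda>i. x ^ i / fact (i + t))"
    by (rule summable_comparison_test'[where N = 0])
  then show ?thesis
    unfolding exp_tail_series_def by (simp add: summable_sums)
qed

lemma ftail_eq_exp_tail_series: "ftail t x = exp (-x) * x ^ t * exp_tail_series t x"
proof -
  have "(\<lambda>i. x ^ t * (x ^ i / fact (i + t))) sums (x ^ t * exp_tail_series t x)"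
    using sums_mult[OF sums_exp_tail_series] by blast
  then have "(\<Sum>i. x ^ (i + t) / fact (i + t)) = x ^ t * exp_tail_series t x"
    by (simp add: sums_iff power_add mult_ac)
  then show ?thesis
    unfolding ftail_def by simp
qed

lemma exp_tail_series_ge_sum:
  assumes "x \<ge> 0" "finite I"
  shows "(\<Sum>i\<in>I. x ^ i / fact (i + t)) \<le> exp_tail_series t x"
  using sums_exp_tail_series[of x t] assms
  unfolding exp_tail_series_def by (intro sum_le_suminf) (auto simp: sums_iff)

lemma exp_tail_series_increment:
  assumes "0 \<le> y" "y \<le> x"
  shows "(x - y) / fact (Suc t) \<le> exp_tail_series t x - exp_tail_series t y"
proof -
  have s: "(\<lambda>i. x ^ i / fact (i + t) - y ^ i / fact (i + t)) sums
      (exp_tail_series t x - exp_tail_series t y)"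
    by (intro sums_diff sums_exp_tail_series)
  have "(\<Sum>i\<in>{1}. x ^ i / fact (i + t) - y ^ i / fact (i + t))
      \<le> exp_tail_series t x - exp_tail_series t y"
    using assms
    by (intro sums_le[OF _ sums_If_finite_set s])
       (auto simp: diff_divide_distrib[symmetric] power_mono divide_right_mono)
  then show ?thesis
    by (simp add: diff_divide_distrib)
qed

lemma exp_tail_series_quarter_le: "exp_tail_series t (1/4) \<le> (4/3) / fact t"
proof -
  have g: "(\<lambda>i. (1/4::real) ^ i / fact t) sums ((1 / (1 - 1/4)) / fact t)"
    using sums_divide[OF geometric_sums[of "1/4::real"], of "fact t"] by simp
  have "exp_tail_series t (1/4) \<le> (\<Sum>i. (1/4::real) ^ i / fact t)"
    unfolding exp_tail_series_def
  proof (rule suminf_le)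
    show "summable (\<lambda>i. (1/4::real) ^ i / fact (i + t))"
      using sums_exp_tail_series by (simp add: sums_iff)
    show "summable (\<lambda>i. (1/4::real) ^ i / fact t)"
      using g by (simp add: sums_iff)
    show "(1/4::real) ^ i / fact (i + t) \<le> (1/4) ^ i / fact t" for i
      by (intro divide_left_mono fact_mono) auto
  qed
  also have "\<dots> = (4/3) / fact t"
    using g by (simp add: sums_iff)
  finally show ?thesis .
qed

lemma DERIV_exp_partial_sum: "DERIV (exp_partial_sum m) x :> exp_partial_sum (m - 1) x"
proof (induction m)
  case 0
  then show ?case by (simp add: exp_partial_sum_def)
next
  case (Suc m)
  have "DERIV (\<lambda>x. exp_partial_sum m x + x ^ m / fact m) x
      :> exp_partial_sum (m - 1) x + real m * x ^ (m - 1) / fact m"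
    using DERIV_pow[of m x] by (intro DERIV_add Suc DERIV_cdivide) simp
  moreover have "exp_partial_sum (m - 1) x + real m * x ^ (m - 1) / fact m = exp_partial_sum m x"
    by (cases m) (simp_all add: exp_partial_sum_def del: of_nat_Suc)
  ultimately show ?case
    by (simp add: exp_partial_sum_def)
qed

lemma DERIV_exp_partial_sum_chain [derivative_intros]:
  "(f has_real_derivative D) (at x within s) \<Longrightarrow>
   ((\<lambda>x. exp_partial_sum m (f x)) has_real_derivative exp_partial_sum (m - 1) (f x) * D)
     (at x within s)"
  using DERIV_chain2[OF DERIV_exp_partial_sum] by blast

lemma DERIV_ftail_Suc: "DERIV (ftail (Suc m)) x :> exp (-x) * x ^ m / fact m"
proof -
  have "DERIV (ftail (Suc m)) x :> - (- exp (-x) * exp_partial_sum (Suc m) x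
      + exp (-x) * exp_partial_sum m x)"
    unfolding ftail_fun_eq by (auto intro!: derivative_eq_intros)
  then show ?thesis
    by (simp add: exp_partial_sum_def algebra_simps)
qed

lemma ftail_pos:
  assumes "x > 0"
  shows "ftail t x > 0"
proof -
  have "(0::real) < 1 / fact t" by simp
  also have "\<dots> \<le> exp_tail_series t x"
    using exp_tail_series_ge_sum[of x "{0}" t] assms by simp
  finally show ?thesis
    using assms by (simp add: ftail_eq_exp_tail_series)
qed

lemma ftail_le_one: "x \<ge> 0 \<Longrightarrow> ftail t x \<le> 1"
  by (simp add: ftail_eq_exp_partial_sum exp_partial_sum_def sum_nonneg)

section \<open>Local expansions of real functions\<close>

lemma MVT_between:
  fixes f f' :: "real \<Rightarrow> real"
  assumes "x \<noteq> x0" and "\<And>y. \<bar>y - x0\<bar> \<le> \<bar>x - x0\<bar> \<Longrightarrow> DERIV f y :> f' y"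
  shows "\<exists>z. \<bar>z - x0\<bar> < \<bar>x - x0\<bar> \<and> f x - f x0 = (x - x0) * f' z"
proof (cases "x0 < x")
  case True
  then obtain z where "x0 < z" "z < x" "f x - f x0 = (x - x0) * f' z"
    using MVT2[OF True, of f f'] assms(2) by fastforce
  then show ?thesis by (intro exI[of _ z]) auto
next
  case False
  with assms(1) have "x < x0" by simp
  then obtain z where "x < z" "z < x0" "f x0 - f x = (x0 - x) * f' z"
    using MVT2[of x x0 f f'] assms(2) by fastforce
  then show ?thesis by (intro exI[of _ z]) (auto simp: algebra_simps)
qed

lemma DERIV_locally_lipschitz:
  fixes \<phi> :: "real \<Rightarrow> real"
  assumes "DERIV \<phi> x0 :> D"
  shows "\<exists>\<rho>>0. \<exists>M\<ge>0. \<forall>x. \<bar>x - x0\<bar> < \<rho> \<longrightarrow> \<bar>\<phi> x - \<phi> x0\<bar> \<le> M * \<bar>x - x0\<bar>"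
proof -
  have "((\<lambda>y. (\<phi> y - \<phi> x0) / (y - x0)) \<longlongrightarrow> D) (at x0)"
    using assms by (simp add: has_field_derivative_iff)
  then have "eventually (\<lambda>y. dist ((\<phi> y - \<phi> x0) / (y - x0)) D < 1) (at x0)"
    by (rule tendstoD) simp
  then obtain \<rho> where \<rho>: "\<rho> > 0"
    "\<And>y. y \<noteq> x0 \<Longrightarrow> \<bar>y - x0\<bar> < \<rho> \<Longrightarrow> \<bar>(\<phi> y - \<phi> x0) / (y - x0) - D\<bar> < 1"
    unfolding eventually_at dist_real_def by auto
  have "\<bar>\<phi> x - \<phi> x0\<bar> \<le> (\<bar>D\<bar> + 1) * \<bar>x - x0\<bar>" if "\<bar>x - x0\<bar> < \<rho>" for x
  proof (cases "x = x0")
    case False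
    then have "\<bar>(\<phi> x - \<phi> x0) / (x - x0)\<bar> \<le> \<bar>D\<bar> + 1"
      using \<rho>(2)[of x] that by linarith
    with False show ?thesis
      by (simp add: divide_le_eq)
  qed simp
  with \<rho>(1) show ?thesis
    by (intro exI[of _ \<rho>] conjI exI[of _ "\<bar>D\<bar> + 1"]) auto
qed

lemma DERIV_remainder_quadratic_bound:
  fixes \<phi> \<phi>' :: "real \<Rightarrow> real"
  assumes "\<rho>0 > 0" "\<And>x. \<bar>x - x0\<bar> < \<rho>0 \<Longrightarrow> DERIV \<phi> x :> \<phi>' x" "DERIV \<phi>' x0 :> D2"
  shows "\<exists>\<rho>>0. \<exists>M\<ge>0. \<forall>x. \<bar>x - x0\<bar> < \<rho> \<longrightarrow>
           \<bar>\<phi> x - \<phi> x0 - \<phi>' x0 * (x - x0)\<bar> \<le> M * (x - x0)\<^sup>2"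
proof -
  obtain \<rho>1 M where M: "\<rho>1 > 0" "M \<ge> 0"
    "\<And>x. \<bar>x - x0\<bar> < \<rho>1 \<Longrightarrow> \<bar>\<phi>' x - \<phi>' x0\<bar> \<le> M * \<bar>x - x0\<bar>"
    using DERIV_locally_lipschitz[OF assms(3)] by blast
  define \<rho> where "\<rho> = min \<rho>0 \<rho>1"
  have "\<bar>\<phi> x - \<phi> x0 - \<phi>' x0 * (x - x0)\<bar> \<le> M * (x - x0)\<^sup>2" if x: "\<bar>x - x0\<bar> < \<rho>" for x
  proof (cases "x = x0")
    case False
    have "DERIV (\<lambda>y. \<phi> y - \<phi>' x0 * y) y :> \<phi>' y - \<phi>' x0" if "\<bar>y - x0\<bar> \<le> \<bar>x - x0\<bar>" for y
      using assms(2)[of y] that x by (auto simp: \<rho>_def intro!: derivative_eq_intros)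
    then obtain z where z: "\<bar>z - x0\<bar> < \<bar>x - x0\<bar>"
      "\<phi> x - \<phi>' x0 * x - (\<phi> x0 - \<phi>' x0 * x0) = (x - x0) * (\<phi>' z - \<phi>' x0)"
      using MVT_between[OF False, of "\<lambda>y. \<phi> y - \<phi>' x0 * y" "\<lambda>y. \<phi>' y - \<phi>' x0"] by blast
    have "\<phi> x - \<phi> x0 - \<phi>' x0 * (x - x0) = (x - x0) * (\<phi>' z - \<phi>' x0)"
      using z(2) by (simp add: algebra_simps)
    then have "\<bar>\<phi> x - \<phi> x0 - \<phi>' x0 * (x - x0)\<bar> = \<bar>x - x0\<bar> * \<bar>\<phi>' z - \<phi>' x0\<bar>"
      by (simp add: abs_mult)
    also have "\<dots> \<le> \<bar>x - x0\<bar> * (M * \<bar>x - x0\<bar>)"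
      using order_trans[OF M(3)[of z] mult_left_mono[OF less_imp_le[OF z(1)] M(2)]] z(1) x
      by (intro mult_left_mono) (auto simp: \<rho>_def)
    also have "\<dots> = M * (x - x0)\<^sup>2"
      by (simp add: power2_eq_square algebra_simps)
    finally show ?thesis .
  qed simp
  moreover have "\<rho> > 0" using assms(1) M(1) by (simp add: \<rho>_def)
  ultimately show ?thesis using M(2) by blast
qed

lemma DERIV_ge_of_increments:
  fixes f :: "real \<Rightarrow> real"
  assumes "DERIV f x :> D" and "\<And>y. x < y \<Longrightarrow> c * (y - x) \<le> f y - f x"
  shows "c \<le> D"
proof (rule tendsto_lowerbound)
  show "((\<lambda>y. (f y - f x) / (y - x)) \<longlongrightarrow> D) (at_right x)"
    using assms(1) unfolding has_field_derivative_iff by (rule tendsto_within_subset) auto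
  show "eventually (\<lambda>y. c \<le> (f y - f x) / (y - x)) (at_right x)"
    unfolding eventually_at_right_field
    using assms(2) by (intro exI[of _ "x + 1"]) (auto simp: pos_le_divide_eq)
qed simp

lemma product_expansion_at_root:
  fixes w g g' :: "real \<Rightarrow> real"
  assumes "DERIV w x0 :> Dw" and "\<rho>0 > 0"
    and "\<And>x. \<bar>x - x0\<bar> < \<rho>0 \<Longrightarrow> DERIV g x :> g' x" and "DERIV g' x0 :> D2"
  shows "\<exists>\<rho>>0. \<exists>L\<ge>0. \<forall>x. \<bar>x - x0\<bar> < \<rho> \<longrightarrow>
           \<bar>w x * (g x - g x0) - w x0 * g' x0 * (x - x0)\<bar> \<le> L * (x - x0)\<^sup>2"
proof -
  obtain \<rho>1 Mw where w: "\<rho>1 > 0" "Mw \<ge> 0"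
    "\<And>x. \<bar>x - x0\<bar> < \<rho>1 \<Longrightarrow> \<bar>w x - w x0\<bar> \<le> Mw * \<bar>x - x0\<bar>"
    using DERIV_locally_lipschitz[OF assms(1)] by blast
  obtain \<rho>2 Mg where g: "\<rho>2 > 0" "Mg \<ge> 0"
    "\<And>x. \<bar>x - x0\<bar> < \<rho>2 \<Longrightarrow> \<bar>g x - g x0 - g' x0 * (x - x0)\<bar> \<le> Mg * (x - x0)\<^sup>2"
    using DERIV_remainder_quadratic_bound[OF assms(2-4)] by blast
  define \<rho> where "\<rho> = min \<rho>1 \<rho>2"
  define W where "W = \<bar>w x0\<bar> + Mw * \<rho>"
  define L where "L = W * Mg + Mw * \<bar>g' x0\<bar>"
  have "\<bar>w x * (g x - g x0) - w x0 * g' x0 * (x - x0)\<bar> \<le> L * (x - x0)\<^sup>2"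
    if x: "\<bar>x - x0\<bar> < \<rho>" for x
  proof -
    have wl: "\<bar>w x - w x0\<bar> \<le> Mw * \<bar>x - x0\<bar>" and gl: "\<bar>g x - g x0 - g' x0 * (x - x0)\<bar> \<le> Mg * (x - x0)\<^sup>2"
      using w(3) g(3) x by (auto simp: \<rho>_def)
    have "Mw * \<bar>x - x0\<bar> \<le> Mw * \<rho>"
      using x w(2) by (intro mult_left_mono) auto
    with wl have wb: "\<bar>w x\<bar> \<le> W"
      unfolding W_def by linarith
    have "w x * (g x - g x0) - w x0 * g' x0 * (x - x0)
        = w x * (g x - g x0 - g' x0 * (x - x0)) + (w x - w x0) * (g' x0 * (x - x0))"
      by (simp add: algebra_simps)
    then have "\<bar>w x * (g x - g x0) - w x0 * g' x0 * (x - x0)\<bar>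
        \<le> \<bar>w x\<bar> * \<bar>g x - g x0 - g' x0 * (x - x0)\<bar> + \<bar>w x - w x0\<bar> * (\<bar>g' x0\<bar> * \<bar>x - x0\<bar>)"
      by (metis abs_mult abs_triangle_ineq)
    also have "\<dots> \<le> W * (Mg * (x - x0)\<^sup>2) + (Mw * \<bar>x - x0\<bar>) * (\<bar>g' x0\<bar> * \<bar>x - x0\<bar>)"
      using wb gl wl g(2) w(2) by (intro add_mono mult_mono) auto
    also have "\<dots> = L * (x - x0)\<^sup>2"
      by (simp add: L_def algebra_simps power2_eq_square)
    finally show ?thesis .
  qed
  moreover have "\<rho> > 0" "L \<ge> 0"
    using w g by (auto simp: \<rho>_def W_def L_def)
  ultimately show ?thesis by blast
qed

lemma cubic_remainder_from_derivative:
  fixes H H' :: "real \<Rightarrow> real"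
  assumes deriv: "\<And>u. 0 \<le> u \<Longrightarrow> u \<le> \<rho> \<Longrightarrow> DERIV H (x0 + u) :> H' (x0 + u)"
    and bound: "\<And>u. 0 \<le> u \<Longrightarrow> u \<le> \<rho> \<Longrightarrow> \<bar>H' (x0 + u) - A * u\<bar> \<le> L * u\<^sup>2"
    and "L \<ge> 0" "0 \<le> s" "s \<le> \<rho>"
  shows "\<bar>H (x0 + s) - H x0 - A/2 * s\<^sup>2\<bar> \<le> L * s ^ 3"
proof (cases "s = 0")
  case False
  with assms(4) have s: "0 < s" by simp
  have "DERIV (\<lambda>u. H (x0 + u) - A/2 * u\<^sup>2) u :> H' (x0 + u) - A * u"
    if "0 \<le> u" "u \<le> s" for u
    using deriv[of u] that assms(5)
    by (auto intro!: derivative_eq_intros DERIV_chain2[of H] simp: power2_eq_square)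
  then obtain z where z: "0 < z" "z < s"
    "H (x0 + s) - A/2 * s\<^sup>2 - (H (x0 + 0) - A/2 * 0\<^sup>2) = (s - 0) * (H' (x0 + z) - A * z)"
    using MVT2[OF s, of "\<lambda>u. H (x0 + u) - A/2 * u\<^sup>2" "\<lambda>u. H' (x0 + u) - A * u"] by blast
  have "H (x0 + s) - H x0 - A/2 * s\<^sup>2 = s * (H' (x0 + z) - A * z)"
    using z(3) by simp
  then have "\<bar>H (x0 + s) - H x0 - A/2 * s\<^sup>2\<bar> = s * \<bar>H' (x0 + z) - A * z\<bar>"
    using s by (simp add: abs_mult)
  also have "\<dots> \<le> s * (L * s\<^sup>2)"
  proof -
    have "\<bar>H' (x0 + z) - A * z\<bar> \<le> L * z\<^sup>2"
      using bound[of z] z assms(5) by simp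
    also have "\<dots> \<le> L * s\<^sup>2"
      using z assms(3) by (intro mult_left_mono power_mono) auto
    finally show ?thesis
      using s by (intro mult_left_mono) auto
  qed
  finally show ?thesis
    by (simp add: power3_eq_cube power2_eq_square algebra_simps)
qed simp

lemma sqrt_of_perturbed_square:
  fixes A L d \<epsilon> :: real
  assumes "A > 0" "d > 0" "\<epsilon> \<ge> 0" and close: "\<bar>\<epsilon> - A/2 * d\<^sup>2\<bar> \<le> L * d ^ 3"
  shows "\<bar>d - sqrt (2/A * \<epsilon>)\<bar> \<le> 2/A * L * d\<^sup>2"
proof -
  define s where "s = sqrt (2/A * \<epsilon>)"
  have s: "s \<ge> 0" "s\<^sup>2 = 2/A * \<epsilon>"
    using assms by (auto simp: s_def)
  have "0 \<le> L * d ^ 3"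
    using close by linarith
  with assms(2) have L: "L \<ge> 0"
    by (simp add: zero_le_mult_iff)
  have "d\<^sup>2 - s\<^sup>2 = (d - s) * (d + s)"
    by (simp add: power2_eq_square algebra_simps)
  then have "\<bar>d - s\<bar> * (d + s) = \<bar>d\<^sup>2 - s\<^sup>2\<bar>"
    using assms(2) s(1) by (simp add: abs_mult)
  also have "\<dots> = 2/A * \<bar>\<epsilon> - A/2 * d\<^sup>2\<bar>"
  proof -
    have "d\<^sup>2 - s\<^sup>2 = 2/A * (A/2 * d\<^sup>2 - \<epsilon>)"
      using assms(1) s(2) by (simp add: field_simps)
    then have "\<bar>d\<^sup>2 - s\<^sup>2\<bar> = \<bar>2/A\<bar> * \<bar>A/2 * d\<^sup>2 - \<epsilon>\<bar>"
      by (simp only: abs_mult)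
    then show ?thesis
      using assms(1) by (simp add: abs_minus_commute)
  qed
  also have "\<dots> \<le> 2/A * (L * d ^ 3)"
    using close assms(1) by (intro mult_left_mono) auto
  also have "\<dots> \<le> 2/A * (L * (d\<^sup>2 * (d + s)))"
    using assms(1,2) s(1) L
    by (intro mult_left_mono) (auto simp: power3_eq_cube power2_eq_square algebra_simps)
  also have "\<dots> = (2/A * L * d\<^sup>2) * (d + s)"
    by simp
  finally have "\<bar>d - s\<bar> * (d + s) \<le> (2/A * L * d\<^sup>2) * (d + s)" .
  moreover have "d + s > 0"
    using assms(2) s(1) by simp
  ultimately show ?thesis
    unfolding s_def by (rule mult_right_le_imp_le)
qed

lemma quadratic_growth_from_expansion:
  fixes H :: "real \<Rightarrow> real"
  assumes A: "A > 0" and "\<rho> > 0"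
    and expansion: "\<And>s. 0 \<le> s \<Longrightarrow> s \<le> \<rho> \<Longrightarrow> \<bar>H (x0 + s) - H x0 - A/2 * s\<^sup>2\<bar> \<le> L * s ^ 3"
  obtains \<rho>' where "0 < \<rho>'" "\<rho>' \<le> \<rho>" "\<And>s. 0 \<le> s \<Longrightarrow> s \<le> \<rho>' \<Longrightarrow> A/4 * s\<^sup>2 \<le> H (x0 + s) - H x0"
proof -
  define L1 where "L1 = \<bar>L\<bar> + 1"
  have L1: "L1 > 0"
    unfolding L1_def by linarith
  define \<rho>' where "\<rho>' = min \<rho> (A / (4 * L1))"
  have \<rho>': "\<rho>' > 0" "\<rho>' \<le> \<rho>"
    using A L1 \<open>\<rho> > 0\<close> by (auto simp: \<rho>'_def)
  have "\<bar>L\<bar> * \<rho>' \<le> L1 * (A / (4 * L1))"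
    using A \<open>\<rho> > 0\<close> by (intro mult_mono) (auto simp: \<rho>'_def L1_def)
  also have "\<dots> = A / 4"
    using L1 by simp
  finally have L\<rho>': "\<bar>L\<bar> * \<rho>' \<le> A / 4" .
  \<comment> \<open>on \<open>[0, \<rho>']\<close> the cubic error eats at most half of the quadratic term\<close>
  have "A/4 * s\<^sup>2 \<le> H (x0 + s) - H x0" if "0 \<le> s" "s \<le> \<rho>'" for s
  proof -
    have "L * s ^ 3 \<le> \<bar>L\<bar> * s ^ 3"
      using that by (intro mult_right_mono) auto
    also have "\<dots> = (\<bar>L\<bar> * s) * s\<^sup>2"
      by (simp add: power3_eq_cube power2_eq_square)
    also have "\<dots> \<le> A/4 * s\<^sup>2"
    proof (rule mult_right_mono)
      have "\<bar>L\<bar> * s \<le> \<bar>L\<bar> * \<rho>'"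
        using that by (intro mult_left_mono) auto
      with L\<rho>' show "\<bar>L\<bar> * s \<le> A/4"
        by linarith
    qed simp
    finally show ?thesis
      using expansion[of s] that \<rho>' by linarith
  qed
  with \<rho>' show ?thesis
    using that by blast
qed

lemma inverse_sqrt_expansion:
  fixes H m :: "real \<Rightarrow> real"
  assumes A: "A > 0" and "\<rho> > 0"
    and expansion: "\<And>s. 0 \<le> s \<Longrightarrow> s \<le> \<rho> \<Longrightarrow> \<bar>H (x0 + s) - H x0 - A/2 * s\<^sup>2\<bar> \<le> L * s ^ 3"
    and mono: "\<And>a b. x0 \<le> a \<Longrightarrow> a < b \<Longrightarrow> H a < H b"
    and preimage: "\<And>\<epsilon>. \<epsilon> > 0 \<Longrightarrow> x0 < m \<epsilon> \<and> H (m \<epsilon>) = H x0 + \<epsilon>"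
  shows "(\<lambda>\<epsilon>. m \<epsilon> - x0 - sqrt (2/A) * sqrt \<epsilon>) \<in> O[at_right 0](\<lambda>\<epsilon>. \<epsilon>)"
proof -
  obtain \<rho>' where \<rho>': "\<rho>' > 0" "\<rho>' \<le> \<rho>"
    and growth: "\<And>s. 0 \<le> s \<Longrightarrow> s \<le> \<rho>' \<Longrightarrow> A/4 * s\<^sup>2 \<le> H (x0 + s) - H x0"
    using quadratic_growth_from_expansion[OF A \<open>\<rho> > 0\<close> expansion] by blast
  define \<epsilon>0 where "\<epsilon>0 = A/4 * \<rho>'\<^sup>2"
  have "\<bar>m \<epsilon> - x0 - sqrt (2/A) * sqrt \<epsilon>\<bar> \<le> 8 * \<bar>L\<bar> / A\<^sup>2 * \<epsilon>"
    if \<epsilon>: "0 < \<epsilon>" "\<epsilon> < \<epsilon>0" for \<epsilon>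
  proof -
    define d where "d = m \<epsilon> - x0"
    have d: "d > 0" "H (x0 + d) = H x0 + \<epsilon>"
      using preimage[OF \<epsilon>(1)] by (auto simp: d_def)
    have "d < \<rho>'"
    proof (rule ccontr)
      assume "\<not> d < \<rho>'"
      then have "H (x0 + \<rho>') \<le> H (x0 + d)"
        using mono[of "x0 + \<rho>'" "x0 + d"] \<rho>'(1) by (cases "\<rho>' = d") auto
      moreover have "A/4 * \<rho>'\<^sup>2 \<le> H (x0 + \<rho>') - H x0"
        using \<rho>'(1) by (intro growth) auto
      ultimately show False
        using d(2) \<epsilon>(2) unfolding \<epsilon>0_def by linarith
    qed
    with d have small: "A/4 * d\<^sup>2 \<le> \<epsilon>"
      using growth[of d] by simp
    from \<open>d < \<rho>'\<close> d \<rho>'(2) have close: "\<bar>\<epsilon> - A/2 * d\<^sup>2\<bar> \<le> L * d ^ 3"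
      using expansion[of d] by simp
    have "\<bar>d - sqrt (2/A * \<epsilon>)\<bar> \<le> 2/A * L * d\<^sup>2"
      using sqrt_of_perturbed_square[OF A d(1) _ close] \<epsilon>(1) by simp
    also have "\<dots> \<le> 2/A * \<bar>L\<bar> * (4/A * \<epsilon>)"
    proof (rule mult_mono)
      show "d\<^sup>2 \<le> 4/A * \<epsilon>"
        using small A by (simp add: field_simps)
      show "2/A * L \<le> 2/A * \<bar>L\<bar>"
        using A by (intro mult_left_mono) auto
    qed (use A in auto)
    also have "\<dots> = 8 * \<bar>L\<bar> / A\<^sup>2 * \<epsilon>"
      by (simp add: power2_eq_square)
    finally show ?thesis
      by (simp add: d_def real_sqrt_mult[symmetric])
  qed
  moreover have "\<epsilon>0 > 0"
    using A \<rho>' by (simp add: \<epsilon>0_def)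
  ultimately have "eventually (\<lambda>\<epsilon>. norm (m \<epsilon> - x0 - sqrt (2/A) * sqrt \<epsilon>)
      \<le> 8 * \<bar>L\<bar> / A\<^sup>2 * norm \<epsilon>) (at_right 0)"
    unfolding eventually_at_right_field by (intro exI[of _ \<epsilon>0]) auto
  then show ?thesis
    by (rule bigoI)
qed

lemma abs_le_of_sqrt_expansion:
  fixes d K N \<epsilon> :: real
  assumes "\<bar>d - K * sqrt \<epsilon>\<bar> \<le> N * \<epsilon>" "0 < \<epsilon>" "\<epsilon> \<le> 1"
  shows "\<bar>d\<bar> \<le> (\<bar>K\<bar> + \<bar>N\<bar>) * sqrt \<epsilon>"
proof -
  have "sqrt \<epsilon> * sqrt \<epsilon> \<le> 1 * sqrt \<epsilon>"
    using assms(2,3) by (intro mult_right_mono) auto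
  then have "N * \<epsilon> \<le> \<bar>N\<bar> * sqrt \<epsilon>"
    using assms(2) by (intro order_trans[OF mult_right_mono[of N "\<bar>N\<bar>"] mult_left_mono]) auto
  moreover have "\<bar>d\<bar> \<le> \<bar>K * sqrt \<epsilon>\<bar> + \<bar>d - K * sqrt \<epsilon>\<bar>"
    by linarith
  moreover have "\<bar>K * sqrt \<epsilon>\<bar> = \<bar>K\<bar> * sqrt \<epsilon>"
    using assms(2) by (simp add: abs_mult)
  ultimately have "\<bar>d\<bar> \<le> \<bar>K\<bar> * sqrt \<epsilon> + \<bar>N\<bar> * sqrt \<epsilon>"
    using assms(1) by linarith
  then show ?thesis
    by (simp add: algebra_simps)
qed

lemma taylor_remainder_along_sqrt:
  fixes \<phi> :: "real \<Rightarrow> real"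
  assumes taylor: "\<bar>\<phi> x - \<phi> x0 - D * (x - x0)\<bar> \<le> M * (x - x0)\<^sup>2" and "M \<ge> 0"
    and close: "\<bar>x - x0 - K * sqrt \<epsilon>\<bar> \<le> N * \<epsilon>" and "0 < \<epsilon>" "\<epsilon> \<le> 1"
  shows "\<bar>\<phi> x - \<phi> x0 - D * K * sqrt \<epsilon>\<bar> \<le> (M * (\<bar>K\<bar> + \<bar>N\<bar>)\<^sup>2 + \<bar>D\<bar> * N) * \<epsilon>"
proof -
  have "M * (x - x0)\<^sup>2 \<le> M * ((\<bar>K\<bar> + \<bar>N\<bar>) * sqrt \<epsilon>)\<^sup>2"
    using power_mono[OF abs_le_of_sqrt_expansion[OF close assms(4,5)] abs_ge_zero, of 2] \<open>M \<ge> 0\<close>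
    by (intro mult_left_mono) auto
  also have "\<dots> = M * (\<bar>K\<bar> + \<bar>N\<bar>)\<^sup>2 * \<epsilon>"
    using assms(4) by (simp add: power_mult_distrib)
  finally have "\<bar>\<phi> x - \<phi> x0 - D * (x - x0)\<bar> \<le> M * (\<bar>K\<bar> + \<bar>N\<bar>)\<^sup>2 * \<epsilon>"
    using taylor by linarith
  moreover have "\<bar>D * (x - x0) - D * K * sqrt \<epsilon>\<bar> \<le> \<bar>D\<bar> * (N * \<epsilon>)"
  proof -
    have "D * (x - x0) - D * K * sqrt \<epsilon> = D * (x - x0 - K * sqrt \<epsilon>)"
      by (simp add: algebra_simps)
    then show ?thesis
      using close by (simp add: abs_mult mult_left_mono)
  qed
  ultimately show ?thesis
    by (simp add: distrib_right)
qed

lemma sqrt_expansion_compose: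
  fixes m \<phi> \<phi>' :: "real \<Rightarrow> real"
  assumes m: "(\<lambda>\<epsilon>. m \<epsilon> - x0 - K * sqrt \<epsilon>) \<in> O[at_right 0](\<lambda>\<epsilon>. \<epsilon>)"
    and "\<rho>0 > 0" "\<And>x. \<bar>x - x0\<bar> < \<rho>0 \<Longrightarrow> DERIV \<phi> x :> \<phi>' x" "DERIV \<phi>' x0 :> D2"
  shows "(\<lambda>\<epsilon>. \<phi> (m \<epsilon>) - \<phi> x0 - \<phi>' x0 * K * sqrt \<epsilon>) \<in> O[at_right 0](\<lambda>\<epsilon>. \<epsilon>)"
proof -
  obtain N where N: "eventually (\<lambda>\<epsilon>. norm (m \<epsilon> - x0 - K * sqrt \<epsilon>) \<le> N * norm \<epsilon>) (at_right 0)"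
    using landau_o.bigE[OF m] by metis
  obtain \<rho> M where \<rho>: "\<rho> > 0" "M \<ge> 0"
    and taylor: "\<And>x. \<bar>x - x0\<bar> < \<rho> \<Longrightarrow> \<bar>\<phi> x - \<phi> x0 - \<phi>' x0 * (x - x0)\<bar> \<le> M * (x - x0)\<^sup>2"
    using DERIV_remainder_quadratic_bound[OF assms(2-4)] by blast
  define B where "B = \<bar>K\<bar> + \<bar>N\<bar>"
  have "((\<lambda>\<epsilon>. B * sqrt \<epsilon>) \<longlongrightarrow> B * sqrt 0) (at_right 0)"
    by (intro tendsto_intros)
  then have "eventually (\<lambda>\<epsilon>. B * sqrt \<epsilon> < \<rho>) (at_right 0)"
    using \<rho>(1) by (intro order_tendstoD) auto
  moreover have "eventually (\<lambda>\<epsilon>. 0 < \<epsilon> \<and> \<epsilon> \<le> 1) (at_right (0::real))"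
    unfolding eventually_at_right_field by (intro exI[of _ 1]) auto
  ultimately have "eventually (\<lambda>\<epsilon>. norm (\<phi> (m \<epsilon>) - \<phi> x0 - \<phi>' x0 * K * sqrt \<epsilon>)
      \<le> (M * B\<^sup>2 + \<bar>\<phi>' x0\<bar> * N) * norm \<epsilon>) (at_right 0)"
    using N
  proof eventually_elim
    case (elim \<epsilon>)
    then have close: "\<bar>m \<epsilon> - x0 - K * sqrt \<epsilon>\<bar> \<le> N * \<epsilon>"
      by simp
    have "\<bar>m \<epsilon> - x0\<bar> < \<rho>"
      using abs_le_of_sqrt_expansion[OF close] elim(1,2) by (simp add: B_def)
    from taylor_remainder_along_sqrt[OF taylor[OF this] \<rho>(2) close] elim(2)
    show ?case
      by (simp add: B_def)
  qed
  then show ?thesis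
    by (rule bigoI)
qed

lemma sqrt_expansion_along_powr:
  fixes F :: "real \<Rightarrow> real"
  assumes F: "(\<lambda>\<epsilon>. F \<epsilon> - K * sqrt \<epsilon>) \<in> O[at_right 0](\<lambda>\<epsilon>. \<epsilon>)" and "\<delta> > 0"
  shows "(\<lambda>n::nat. F (real n powr (-\<delta>)) - K * real n powr (-\<delta>/2)) \<in> O(\<lambda>n. real n powr (-\<delta>))"
proof -
  have "((\<lambda>n. real n powr (-\<delta>)) \<longlongrightarrow> 0) sequentially"
    using \<open>\<delta> > 0\<close> by (intro tendsto_neg_powr filterlim_real_sequentially) auto
  moreover have "eventually (\<lambda>n. real n powr (-\<delta>) \<in> {0<..}) sequentially"
    using eventually_gt_at_top[of 0] by eventually_elim auto
  ultimately have "filterlim (\<lambda>n. real n powr (-\<delta>)) (at_right 0) sequentially"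
    by (auto simp: filterlim_at elim: eventually_mono)
  from landau_o.big.compose[OF F this]
  have "(\<lambda>n. F (real n powr (-\<delta>)) - K * sqrt (real n powr (-\<delta>))) \<in> O(\<lambda>n. real n powr (-\<delta>))" .
  also have "(\<lambda>n. F (real n powr (-\<delta>)) - K * sqrt (real n powr (-\<delta>)))
      = (\<lambda>n. F (real n powr (-\<delta>)) - K * real n powr (-\<delta>/2))"
    by (rule ext) (metis powr_half_sqrt_powr of_nat_0_le_iff)
  finally show ?thesis .
qed

section \<open>The function \<open>h\<close> near its minimiser\<close>

definition ftail_deriv :: "nat \<Rightarrow> real \<Rightarrow> real" where
  "ftail_deriv k x = exp (-x) * x ^ (k - 2) / fact (k - 2)"

definition tail_ratio :: "nat \<Rightarrow> real \<Rightarrow> real" where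
  "tail_ratio k x = fact (k - 2) * ((exp x - exp_partial_sum (k - 1) x) / x ^ (k - 1))"

definition tail_ratio_deriv :: "nat \<Rightarrow> real \<Rightarrow> real" where
  "tail_ratio_deriv k x = fact (k - 2) *
     (((exp x - exp_partial_sum (k - 2) x) * x ^ (k - 1)
       - (exp x - exp_partial_sum (k - 1) x) * (real (k - 1) * x ^ (k - 2)))
      / (x ^ (k - 1) * x ^ (k - 1)))"

definition scaled_h :: "nat \<Rightarrow> nat \<Rightarrow> real \<Rightarrow> real" where
  "scaled_h r k x = fact (r - 1) * hfun r k x"

definition h_weight :: "nat \<Rightarrow> nat \<Rightarrow> real \<Rightarrow> real" where
  "h_weight r k x = fact (r - 1) * x * ftail_deriv k x / ftail (k - 1) x ^ r"

context
  fixes k :: nat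
  assumes k2: "k \<ge> 2"
begin

lemma DERIV_ftail_pred: "DERIV (ftail (k - 1)) x :> ftail_deriv k x"
  using DERIV_ftail_Suc[of "k - 2" x] k2 by (simp add: ftail_deriv_def Suc_diff_Suc numeral_2_eq_2)

lemma ftail_deriv_pos: "x > 0 \<Longrightarrow> ftail_deriv k x > 0"
  by (simp add: ftail_deriv_def)

lemma ftail_pred_eq_tail_ratio:
  assumes "x > 0"
  shows "ftail (k - 1) x = x * ftail_deriv k x * tail_ratio k x"
proof -
  have "x ^ (k - 1) = x * x ^ (k - 2)"
    using k2 by (simp flip: power_Suc add: Suc_diff_Suc numeral_2_eq_2)
  then show ?thesis
    using assms
    by (simp add: ftail_deriv_def tail_ratio_def ftail_eq_exp_partial_sum exp_minus field_simps)
qed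

lemma tail_ratio_eq_exp_tail_series:
  assumes "x > 0"
  shows "tail_ratio k x = fact (k - 2) * exp_tail_series (k - 1) x"
proof -
  have "x ^ (k - 1) * exp_tail_series (k - 1) x = exp x - exp_partial_sum (k - 1) x"
    using ftail_eq_exp_tail_series[of "k - 1" x] ftail_eq_exp_partial_sum[of "k - 1" x]
    by (simp add: exp_minus field_simps)
  then have "tail_ratio k x
      = fact (k - 2) * (x ^ (k - 1) * exp_tail_series (k - 1) x / x ^ (k - 1))"
    by (simp add: tail_ratio_def)
  with assms show ?thesis
    by simp
qed

lemma tail_ratio_increment:
  assumes "0 < y" "y \<le> x"
  shows "fact (k - 2) / fact k * (x - y) \<le> tail_ratio k x - tail_ratio k y"
proof -
  have "(x - y) / fact k \<le> exp_tail_series (k - 1) x - exp_tail_series (k - 1) y"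
    using exp_tail_series_increment[of y x "k - 1"] assms k2 by simp
  then have "fact (k - 2) * ((x - y) / fact k)
      \<le> fact (k - 2) * (exp_tail_series (k - 1) x - exp_tail_series (k - 1) y)"
    by (intro mult_left_mono) auto
  then show ?thesis
    using assms by (simp add: tail_ratio_eq_exp_tail_series algebra_simps)
qed

lemma tail_ratio_strict_mono: "0 < y \<Longrightarrow> y < x \<Longrightarrow> tail_ratio k y < tail_ratio k x"
proof -
  assume "0 < y" "y < x"
  moreover have "0 < fact (k - 2) / fact k * (x - y)"
    using \<open>y < x\<close> by simp
  ultimately show ?thesis
    using tail_ratio_increment[of y x] by linarith
qed

lemma continuous_on_tail_ratio: "continuous_on {0<..} (tail_ratio k)"
  unfolding tail_ratio_def exp_partial_sum_def by (intro continuous_intros) auto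

lemma DERIV_tail_ratio:
  assumes "x > 0"
  shows "DERIV (tail_ratio k) x :> tail_ratio_deriv k x"
proof -
  have "DERIV (\<lambda>x. x ^ (k - 1)) x :> real (k - 1) * x ^ (k - 2)"
    using DERIV_pow[of "k - 1" x] by (simp add: numeral_2_eq_2)
  moreover have "DERIV (\<lambda>x. exp x - exp_partial_sum (k - 1) x) x :> exp x - exp_partial_sum (k - 2) x"
    using DERIV_diff[OF DERIV_exp DERIV_exp_partial_sum[of "k - 1"]] by (simp add: numeral_2_eq_2)
  ultimately show ?thesis
    unfolding tail_ratio_def[abs_def] tail_ratio_deriv_def
    using assms by (intro DERIV_cmult DERIV_divide) auto
qed

lemma tail_ratio_deriv_differentiable: "x > 0 \<Longrightarrow> \<exists>D. DERIV (tail_ratio_deriv k) x :> D"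
  unfolding tail_ratio_deriv_def[abs_def] by (rule exI) (auto intro!: derivative_eq_intros)

lemma fact_minus_1_eq: "(fact (k - 1) :: real) = real (k - 1) * fact (k - 2)"
  and fact_eq_fact_minus_2: "(fact k :: real) = real k * (real (k - 1) * fact (k - 2))"
proof -
  obtain j where "k = Suc (Suc j)"
    using k2 by (metis add_2_eq_Suc le_Suc_ex)
  then show "(fact (k - 1) :: real) = real (k - 1) * fact (k - 2)"
    and "(fact k :: real) = real k * (real (k - 1) * fact (k - 2))"
    by simp_all
qed

end

lemma ftail_deriv_differentiable: "\<exists>D. DERIV (ftail_deriv k) x :> D"
  unfolding ftail_deriv_def[abs_def] by (rule exI) (auto intro!: derivative_eq_intros)

locale rk_admissible =
  fixes r k :: nat
  assumes r2: "r \<ge> 2" and k2: "k \<ge> 2" and not_2_2: "(r, k) \<noteq> (2, 2)"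
begin

lemma DERIV_scaled_h:
  assumes x: "x > 0"
  shows "DERIV (scaled_h r k) x :> h_weight r k x * (tail_ratio k x - (real r - 1))"
proof -
  obtain n where n: "r = Suc (Suc n)"
    using r2 by (metis add_2_eq_Suc le_Suc_ex)
  define f where "f = ftail (k - 1) x"
  have f: "f > 0"
    using ftail_pos[OF x] by (simp add: f_def)
  have "DERIV (scaled_h r k) x :> fact (Suc n) * ((1 * f ^ Suc n
      - x * (real (Suc n) * (ftail_deriv k x * f ^ (Suc n - Suc 0)))) / (f ^ Suc n * f ^ Suc n))"
    unfolding scaled_h_def[abs_def] hfun_def f_def n diff_Suc_1 using f[unfolded f_def]
    by (intro DERIV_cmult DERIV_divide DERIV_ident DERIV_power DERIV_ftail_pred[OF k2]) auto
  moreover have "fact (Suc n) * ((1 * f ^ Suc n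
      - x * (real (Suc n) * (ftail_deriv k x * f ^ (Suc n - Suc 0)))) / (f ^ Suc n * f ^ Suc n))
      = fact (Suc n) * (f - x * real (Suc n) * ftail_deriv k x) / f ^ r"
    using f by (simp add: n field_simps)
  moreover have "f - x * real (Suc n) * ftail_deriv k x
      = x * ftail_deriv k x * (tail_ratio k x - (real r - 1))"
    using ftail_pred_eq_tail_ratio[OF k2 x] by (simp add: f_def n algebra_simps)
  ultimately show ?thesis
    by (simp add: h_weight_def f_def n mult.assoc)
qed

lemma h_weight_pos: "x > 0 \<Longrightarrow> h_weight r k x > 0"
  using ftail_deriv_pos[OF k2] ftail_pos by (simp add: h_weight_def)

lemma tail_ratio_quarter_lt: "tail_ratio k (1/4) < real r - 1"
proof -
  have "tail_ratio k (1/4) = fact (k - 2) * exp_tail_series (k - 1) (1/4)"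
    by (simp add: tail_ratio_eq_exp_tail_series[OF k2])
  also have "\<dots> \<le> fact (k - 2) * ((4/3) / fact (k - 1))"
    by (intro mult_left_mono exp_tail_series_quarter_le) simp
  also have "\<dots> = (4/3) / real (k - 1)"
    unfolding fact_minus_1_eq[OF k2] by simp
  also have "\<dots> < real r - 1"
  proof (cases "k = 2")
    case True
    with r2 not_2_2 have "r \<ge> 3" by auto
    with True show ?thesis by simp
  next
    case False
    with k2 have "real (k - 1) \<ge> 2" by linarith
    then have "(4/3) / real (k - 1) \<le> 2/3"
      by (simp add: field_simps)
    also have "(2/3 :: real) < real r - 1"
      using r2 by simp
    finally show ?thesis .
  qed
  finally show ?thesis .
qed

lemma tail_ratio_large_gt: "real r - 1 < tail_ratio k (real (r * k * (k - 1)))"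
proof -
  define X where "X = real (r * k * (k - 1))"
  have X: "X > 0"
    using r2 k2 by (simp add: X_def)
  have "X / fact k \<le> exp_tail_series (k - 1) X"
    using exp_tail_series_ge_sum[of X "{1}" "k - 1"] X k2 by simp
  then have "fact (k - 2) * (X / fact k) \<le> fact (k - 2) * exp_tail_series (k - 1) X"
    by (rule mult_left_mono) simp
  also have "\<dots> = tail_ratio k X"
    using tail_ratio_eq_exp_tail_series[OF k2 X] by simp
  finally have "fact (k - 2) * (X / fact k) \<le> tail_ratio k X" .
  moreover have "fact (k - 2) * (X / fact k) = real r"
    using k2 r2 by (simp add: X_def fact_eq_fact_minus_2[OF k2] field_simps)
  ultimately show ?thesis
    by (simp add: X_def)
qed

lemma tail_ratio_root_exists: "\<exists>x>0. tail_ratio k x = real r - 1"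
proof -
  define X where "X = real (r * k * (k - 1))"
  have "1 \<le> r * k * (k - 1)"
    using r2 k2 by simp
  then have X: "1/4 \<le> X"
    unfolding X_def by linarith
  have "continuous_on {1/4..X} (tail_ratio k)"
    by (rule continuous_on_subset[OF continuous_on_tail_ratio[OF k2]]) auto
  then obtain x where "1/4 \<le> x" "tail_ratio k x = real r - 1"
    using IVT'[OF less_imp_le[OF tail_ratio_quarter_lt]
        less_imp_le[OF tail_ratio_large_gt[folded X_def]] X] by blast
  then show ?thesis
    by (intro exI[of _ x]) auto
qed

definition mu_crit :: real where
  "mu_crit = (SOME x. x > 0 \<and> tail_ratio k x = real r - 1)"

lemma mu_crit: "mu_crit > 0" "tail_ratio k mu_crit = real r - 1"
  using someI_ex[OF tail_ratio_root_exists[unfolded Bex_def]] unfolding mu_crit_def by auto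

lemma continuous_on_scaled_h: "0 < a \<Longrightarrow> continuous_on {a..b} (scaled_h r k)"
  by (intro continuous_at_imp_continuous_on ballI DERIV_isCont[OF DERIV_scaled_h]) auto

lemma scaled_h_strict_antimono:
  assumes "0 < a" "a < b" "b \<le> mu_crit"
  shows "scaled_h r k b < scaled_h r k a"
proof (rule DERIV_neg_imp_decreasing_open[OF assms(2) _ continuous_on_scaled_h[OF assms(1)]])
  fix x assume x: "a < x" "x < b"
  with assms have "tail_ratio k x < real r - 1"
    using tail_ratio_strict_mono[OF k2, of x mu_crit] mu_crit by simp
  with x assms have "h_weight r k x * (tail_ratio k x - (real r - 1)) < 0"
    using h_weight_pos[of x] by (intro mult_pos_neg) auto
  then show "\<exists>y. DERIV (scaled_h r k) x :> y \<and> y < 0"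
    using DERIV_scaled_h[of x] x assms by auto
qed

lemma scaled_h_strict_mono:
  assumes "mu_crit \<le> a" "a < b"
  shows "scaled_h r k a < scaled_h r k b"
proof (rule DERIV_pos_imp_increasing_open[OF assms(2) _ continuous_on_scaled_h])
  fix x assume x: "a < x" "x < b"
  with assms have "real r - 1 < tail_ratio k x"
    using tail_ratio_strict_mono[OF k2, of mu_crit x] mu_crit by simp
  with x assms mu_crit(1) have "h_weight r k x * (tail_ratio k x - (real r - 1)) > 0"
    using h_weight_pos[of x] by (intro mult_pos_pos) auto
  then show "\<exists>y. DERIV (scaled_h r k) x :> y \<and> y > 0"
    using DERIV_scaled_h[of x] x assms mu_crit(1) by auto
qed (use assms mu_crit(1) in auto)

lemma scaled_h_strict_min: "x > 0 \<Longrightarrow> x \<noteq> mu_crit \<Longrightarrow> scaled_h r k mu_crit < scaled_h r k x"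
  using scaled_h_strict_antimono[of x mu_crit] scaled_h_strict_mono[of mu_crit x]
  by (cases "x < mu_crit") auto

lemma c_rk_eq: "c_rk r k = scaled_h r k mu_crit"
proof -
  have "c_rk r k = Inf (scaled_h r k ` {0<..})"
    by (simp add: c_rk_def scaled_h_def)
  also have "\<dots> = scaled_h r k mu_crit"
    using mu_crit scaled_h_strict_min by (intro cInf_eq_minimum) (auto intro: less_imp_le)
  finally show ?thesis .
qed

lemma mu_rk_eq: "mu_rk r k = mu_crit"
proof -
  have "mu_rk r k = (THE \<mu>. \<mu> > 0 \<and> scaled_h r k \<mu> = scaled_h r k mu_crit)"
    by (simp add: mu_rk_def scaled_h_def c_rk_eq)
  also have "\<dots> = mu_crit"
    using mu_crit scaled_h_strict_min by (intro the_equality) force+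
  finally show ?thesis .
qed

lemma scaled_h_ge: "x > 0 \<Longrightarrow> fact (r - 1) * x \<le> scaled_h r k x"
  using ftail_pos[of x "k - 1"] ftail_le_one[of x "k - 1"]
  by (simp add: scaled_h_def hfun_def le_divide_eq power_le_one)

lemma mu_c_spec:
  assumes "\<epsilon> > 0"
  shows "mu_crit < mu_c r k (c_rk r k + \<epsilon>) \<and> scaled_h r k (mu_c r k (c_rk r k + \<epsilon>)) = c_rk r k + \<epsilon>"
proof -
  define c where "c = c_rk r k + \<epsilon>"
  define X where "X = mu_crit + c / fact (r - 1)"
  have "scaled_h r k mu_crit > 0"
    using mu_crit(1) ftail_pos[OF mu_crit(1)] by (simp add: scaled_h_def hfun_def)
  with assms have "c > 0"
    by (simp add: c_def c_rk_eq)
  then have X: "mu_crit \<le> X"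
    by (simp add: X_def)
  have "c \<le> fact (r - 1) * X"
    using mu_crit(1) by (simp add: X_def field_simps)
  also have "\<dots> \<le> scaled_h r k X"
    using scaled_h_ge X mu_crit(1) by simp
  finally obtain m where m: "mu_crit \<le> m" "scaled_h r k m = c"
    using IVT'[of "scaled_h r k" mu_crit c X] X continuous_on_scaled_h[OF mu_crit(1), of X] assms
    by (auto simp: c_def c_rk_eq)
  with assms have "mu_crit < m"
    by (cases "m = mu_crit") (auto simp: c_def c_rk_eq)
  have "mu_c r k c = (GREATEST \<mu>. \<mu> > 0 \<and> c = scaled_h r k \<mu>)"
    by (simp add: mu_c_def scaled_h_def)
  also have "\<dots> = m"
  proof (rule Greatest_equality)
    show "m > 0 \<and> c = scaled_h r k m"
      using m \<open>mu_crit < m\<close> mu_crit(1) by auto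
    show "y \<le> m" if "y > 0 \<and> c = scaled_h r k y" for y
      using scaled_h_strict_mono[of m y] that m \<open>mu_crit < m\<close> by force
  qed
  finally show ?thesis
    using m \<open>mu_crit < m\<close> by (simp add: c_def)
qed

lemma tail_ratio_deriv_pos: "tail_ratio_deriv k mu_crit > 0"
proof -
  have "fact (k - 2) / fact k \<le> tail_ratio_deriv k mu_crit"
    using tail_ratio_increment[OF k2] mu_crit(1)
    by (intro DERIV_ge_of_increments[OF DERIV_tail_ratio[OF k2 mu_crit(1)]]) auto
  moreover have "(0::real) < fact (k - 2) / fact k"
    by simp
  ultimately show ?thesis
    by linarith
qed

lemma h_weight_differentiable: "\<exists>D. DERIV (h_weight r k) mu_crit :> D"
proof -
  have "1 - exp (- mu_crit) * exp_partial_sum (k - 1) mu_crit \<noteq> 0"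
    using ftail_pos[OF mu_crit(1), of "k - 1"] by (simp add: ftail_eq_exp_partial_sum)
  then show ?thesis
    unfolding h_weight_def[abs_def] ftail_deriv_def ftail_fun_eq
    by (intro exI) (auto intro!: derivative_eq_intros)
qed

lemma scaled_h_quadratic_expansion:
  "\<exists>A>0. \<exists>\<rho>>0. \<exists>L. \<forall>s. 0 \<le> s \<and> s \<le> \<rho> \<longrightarrow>
     \<bar>scaled_h r k (mu_crit + s) - scaled_h r k mu_crit - A/2 * s\<^sup>2\<bar> \<le> L * s ^ 3"
proof -
  obtain Dw where Dw: "DERIV (h_weight r k) mu_crit :> Dw"
    using h_weight_differentiable by blast
  obtain D2 where D2: "DERIV (tail_ratio_deriv k) mu_crit :> D2"
    using tail_ratio_deriv_differentiable[OF k2 mu_crit(1)] by blast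
  have "DERIV (tail_ratio k) x :> tail_ratio_deriv k x" if "\<bar>x - mu_crit\<bar> < mu_crit" for x
    using that by (intro DERIV_tail_ratio[OF k2]) auto
  then obtain \<rho> L where \<rho>: "\<rho> > 0" "L \<ge> 0" and bound: "\<And>x. \<bar>x - mu_crit\<bar> < \<rho> \<Longrightarrow>
      \<bar>h_weight r k x * (tail_ratio k x - tail_ratio k mu_crit)
        - h_weight r k mu_crit * tail_ratio_deriv k mu_crit * (x - mu_crit)\<bar> \<le> L * (x - mu_crit)\<^sup>2"
    using product_expansion_at_root[OF Dw mu_crit(1) _ D2] by metis
  define A where "A = h_weight r k mu_crit * tail_ratio_deriv k mu_crit"
  have "\<bar>scaled_h r k (mu_crit + s) - scaled_h r k mu_crit - A/2 * s\<^sup>2\<bar> \<le> L * s ^ 3"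
    if "0 \<le> s" "s \<le> \<rho>/2" for s
  proof (rule cubic_remainder_from_derivative[OF _ _ \<rho>(2) that])
    show "DERIV (scaled_h r k) (mu_crit + u)
        :> h_weight r k (mu_crit + u) * (tail_ratio k (mu_crit + u) - (real r - 1))" if "0 \<le> u" for u
      using that mu_crit(1) by (intro DERIV_scaled_h) auto
    show "\<bar>h_weight r k (mu_crit + u) * (tail_ratio k (mu_crit + u) - (real r - 1)) - A * u\<bar> \<le> L * u\<^sup>2"
      if "0 \<le> u" "u \<le> \<rho>/2" for u
      using bound[of "mu_crit + u"] that \<rho>(1) by (simp add: A_def mu_crit(2))
  qed
  moreover have "A > 0"
    using h_weight_pos[OF mu_crit(1)] tail_ratio_deriv_pos by (simp add: A_def)
  ultimately show ?thesis
    using \<rho>(1) by (intro exI[of _ A] conjI exI[of _ "\<rho>/2"] exI[of _ L]) auto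
qed

lemma mu_c_sqrt_expansion:
  "\<exists>K>0. (\<lambda>\<epsilon>. mu_c r k (c_rk r k + \<epsilon>) - mu_rk r k - K * sqrt \<epsilon>) \<in> O[at_right 0](\<lambda>\<epsilon>. \<epsilon>)"
proof -
  obtain A \<rho> L where "A > 0" "\<rho> > 0" and expansion: "\<And>s. 0 \<le> s \<Longrightarrow> s \<le> \<rho> \<Longrightarrow>
      \<bar>scaled_h r k (mu_crit + s) - scaled_h r k mu_crit - A/2 * s\<^sup>2\<bar> \<le> L * s ^ 3"
    using scaled_h_quadratic_expansion by blast
  have "(\<lambda>\<epsilon>. mu_c r k (c_rk r k + \<epsilon>) - mu_crit - sqrt (2/A) * sqrt \<epsilon>) \<in> O[at_right 0](\<lambda>\<epsilon>. \<epsilon>)"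
    using mu_c_spec scaled_h_strict_mono
    by (intro inverse_sqrt_expansion[OF \<open>A > 0\<close> \<open>\<rho> > 0\<close> expansion]) (auto simp: c_rk_eq)
  then show ?thesis
    using \<open>A > 0\<close> by (intro exI[of _ "sqrt (2/A)"]) (simp add: mu_rk_eq)
qed

lemma mu_rk_pos: "mu_rk r k > 0"
  using mu_crit(1) by (simp add: mu_rk_eq)

lemma alpha_c_sqrt_expansion:
  assumes "K > 0"
    and mu: "(\<lambda>\<epsilon>. mu_c r k (c_rk r k + \<epsilon>) - mu_rk r k - K * sqrt \<epsilon>) \<in> O[at_right 0](\<lambda>\<epsilon>. \<epsilon>)"
  shows "\<exists>K'>0. (\<lambda>\<epsilon>. alpha_c r k (c_rk r k + \<epsilon>) - alpha_rk r k - K' * sqrt \<epsilon>) \<in> O[at_right 0](\<lambda>\<epsilon>. \<epsilon>)"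
proof -
  obtain D where D: "DERIV (ftail_deriv (Suc k)) (mu_rk r k) :> D"
    using ftail_deriv_differentiable by blast
  have "DERIV (ftail k) x :> ftail_deriv (Suc k) x" for x
    using DERIV_ftail_pred[of "Suc k" x] k2 by simp
  from sqrt_expansion_compose[OF mu zero_less_one this D]
  have "(\<lambda>\<epsilon>. alpha_c r k (c_rk r k + \<epsilon>) - alpha_rk r k - ftail_deriv (Suc k) (mu_rk r k) * K * sqrt \<epsilon>)
      \<in> O[at_right 0](\<lambda>\<epsilon>. \<epsilon>)"
    by (simp only: alpha_c_def alpha_rk_def)
  moreover have "ftail_deriv (Suc k) (mu_rk r k) * K > 0"
    using ftail_deriv_pos[of "Suc k" "mu_rk r k"] k2 mu_rk_pos \<open>K > 0\<close> by simp
  ultimately show ?thesis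
    by blast
qed

lemma beta_c_sqrt_expansion:
  assumes "K > 0"
    and mu: "(\<lambda>\<epsilon>. mu_c r k (c_rk r k + \<epsilon>) - mu_rk r k - K * sqrt \<epsilon>) \<in> O[at_right 0](\<lambda>\<epsilon>. \<epsilon>)"
  shows "\<exists>K'>0. (\<lambda>\<epsilon>. beta_c r k (c_rk r k + \<epsilon>) - beta_rk r k - K' * sqrt \<epsilon>) \<in> O[at_right 0](\<lambda>\<epsilon>. \<epsilon>)"
proof -
  define \<mu> where "\<mu> = mu_rk r k"
  have \<mu>: "\<mu> > 0"
    using mu_rk_pos by (simp add: \<mu>_def)
  obtain D where D: "DERIV (ftail_deriv k) \<mu> :> D"
    using ftail_deriv_differentiable by blast
  define \<beta>' where "\<beta>' x = 1 / real r * (ftail (k - 1) x + x * ftail_deriv k x)" for x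
  have "DERIV (\<lambda>x. 1 / real r * x * ftail (k - 1) x) x :> \<beta>' x" for x
    unfolding \<beta>'_def using DERIV_ftail_pred[OF k2, of x] r2
    by (auto intro!: derivative_eq_intros simp: field_simps)
  moreover have "DERIV \<beta>' \<mu> :> 1 / real r * (ftail_deriv k \<mu> + (ftail_deriv k \<mu> + \<mu> * D))"
    unfolding \<beta>'_def[abs_def] using DERIV_ftail_pred[OF k2, of \<mu>] D r2
    by (auto intro!: derivative_eq_intros)
  ultimately have "(\<lambda>\<epsilon>. 1 / real r * mu_c r k (c_rk r k + \<epsilon>) * ftail (k - 1) (mu_c r k (c_rk r k + \<epsilon>))
      - 1 / real r * \<mu> * ftail (k - 1) \<mu> - \<beta>' \<mu> * K * sqrt \<epsilon>) \<in> O[at_right 0](\<lambda>\<epsilon>. \<epsilon>)"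
    unfolding \<mu>_def by (rule sqrt_expansion_compose[OF mu zero_less_one])
  then have "(\<lambda>\<epsilon>. beta_c r k (c_rk r k + \<epsilon>) - beta_rk r k - \<beta>' \<mu> * K * sqrt \<epsilon>)
      \<in> O[at_right 0](\<lambda>\<epsilon>. \<epsilon>)"
    by (simp only: beta_c_def beta_rk_def \<mu>_def)
  moreover have "\<beta>' \<mu> * K > 0"
    unfolding \<beta>'_def using ftail_pos[OF \<mu>] ftail_deriv_pos[OF k2 \<mu>] \<mu> r2 \<open>K > 0\<close>
    by (intro mult_pos_pos add_pos_pos) auto
  ultimately show ?thesis
    by blast
qed

end

theorem lemma34:
  fixes r k :: nat
  assumes "r \<ge> 2" and "k \<ge> 2" and "(r, k) \<noteq> (2, 2)"
  shows "\<exists>K1 K2 K3 :: real. K1 > 0 \<and> K2 > 0 \<and> K3 > 0 \<and>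
    (\<forall>\<delta>::real. 0 < \<delta> \<and> \<delta> < 1/2 \<longrightarrow>
      (\<lambda>n::nat. mu_c r k (c_rk r k + real n powr (-\<delta>)) - mu_rk r k
          - K1 * real n powr (-\<delta>/2)) \<in> O(\<lambda>n. real n powr (-\<delta>)) \<and>
      (\<lambda>n::nat. alpha_c r k (c_rk r k + real n powr (-\<delta>)) - alpha_rk r k
          - K2 * real n powr (-\<delta>/2)) \<in> O(\<lambda>n. real n powr (-\<delta>)) \<and>
      (\<lambda>n::nat. beta_c r k (c_rk r k + real n powr (-\<delta>)) - beta_rk r k
          - K3 * real n powr (-\<delta>/2)) \<in> O(\<lambda>n. real n powr (-\<delta>)))"
proof -
  interpret rk_admissible r k
    using assms by unfold_locales auto
  obtain K1 where K1: "K1 > 0"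
    and mu: "(\<lambda>\<epsilon>. mu_c r k (c_rk r k + \<epsilon>) - mu_rk r k - K1 * sqrt \<epsilon>) \<in> O[at_right 0](\<lambda>\<epsilon>. \<epsilon>)"
    using mu_c_sqrt_expansion by blast
  obtain K2 where K2: "K2 > 0"
    and alpha: "(\<lambda>\<epsilon>. alpha_c r k (c_rk r k + \<epsilon>) - alpha_rk r k - K2 * sqrt \<epsilon>) \<in> O[at_right 0](\<lambda>\<epsilon>. \<epsilon>)"
    using alpha_c_sqrt_expansion[OF K1 mu] by blast
  obtain K3 where K3: "K3 > 0"
    and beta: "(\<lambda>\<epsilon>. beta_c r k (c_rk r k + \<epsilon>) - beta_rk r k - K3 * sqrt \<epsilon>) \<in> O[at_right 0](\<lambda>\<epsilon>. \<epsilon>)"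
    using beta_c_sqrt_expansion[OF K1 mu] by blast
  show ?thesis
    using K1 K2 K3
    by (intro exI[of _ K1] exI[of _ K2] exI[of _ K3] conjI allI impI sqrt_expansion_along_powr[OF mu]
        sqrt_expansion_along_powr[OF alpha] sqrt_expansion_along_powr[OF beta]) auto
qed

end
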